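(* Let $V$ be a preference profile over a finite candidate set $C$ with a fixed tie-breaking order, and let $w$ be the 3-Approval winner at $V$. Let $Q$ be the set of candidates $x$ such that some voter $i$ with $w\in\mathrm{top}_3(v_i)$ (a Type 2 manipulator) manipulates in favour of $x$, i.e. has a vote $v_i'$ with $3\text{-App}(V_{-i},v_i')=x$ and $x\succ_i w$. Then $|Q|\le 2$.
   Context: Each voter $i$ has a strict linear order $v_i$ over $C$; $x\succ_i y$ means $i$ ranks $x$ above $y$; $\mathrm{top}_3(v)$ is the set of the three highest-ranked candidates of $v$. 3-Approval ($3\text{-App}$): each candidate gets one point from each voter ranking her among his top three; the highest score wins, ties broken in favour of the candidate highest in the fixed strict linear order on $C$. $(V_{-i},v_i')$ denotes $V$ with $v_i$ replaced by $v_i'$. *)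

theory Defs
  imports Main
begin

text \<open>A vote (strict linear order over the candidate set C) is a list of distinct
  candidates enumerating C, best first.  The fixed tie-breaking order is also such a list,
  earlier meaning higher priority.\<close>

definition is_ranking :: "'a set \<Rightarrow> 'a list \<Rightarrow> bool" where
  "is_ranking C v \<longleftrightarrow> distinct v \<and> set v = C"

definition prefers :: "'a list \<Rightarrow> 'a \<Rightarrow> 'a \<Rightarrow> bool" where
  "prefers v x y \<longleftrightarrow> (\<exists>k l. k < l \<and> l < length v \<and> v ! k = x \<and> v ! l = y)"

definition top3 :: "'a list \<Rightarrow> 'a set" where
  "top3 v = set (take 3 v)"

definition app_score :: "'a list list \<Rightarrow> 'a \<Rightarrow> nat" where
  "app_score V x = card {i. i < length V \<and> x \<in> top3 (V ! i)}"

definition app3 :: "'a list \<Rightarrow> 'a list list \<Rightarrow> 'a" where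
  "app3 t V = hd (filter (\<lambda>x. app_score V x = Max (app_score V ` set t)) t)"

end

theory Submission
  imports Defs
begin

text \<open>Order the candidates by their score in V, ties broken by t; call the position of x
  in this strict total order its rank (the number of candidates beating x).  The winner w
  has rank 0.  If a voter with w in his top three makes x win, x is in his top three as
  well, so changing his vote cannot raise the score of x, nor lower the score of any
  candidate outside his top three: every candidate beating x in V is therefore in that
  top three, and x has rank 1 or 2.  Distinct candidates have distinct ranks.\<close>

lemma prefers_Nil [simp]: "\<not> prefers [] x y"
  by (simp add: prefers_def)

lemma prefers_Cons [simp]:
  "prefers (a # v) x y \<longleftrightarrow> (x = a \<and> y \<in> set v) \<or> prefers v x y"
proof
  assume "prefers (a # v) x y"
  then obtain k l where kl: "k < l" "l < Suc (length v)" "(a # v) ! k = x" "(a # v) ! l = y"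
    by (auto simp: prefers_def)
  then obtain l' where l': "l = Suc l'" by (cases l) auto
  show "(x = a \<and> y \<in> set v) \<or> prefers v x y"
  proof (cases k)
    case 0
    then show ?thesis using kl l' by auto
  next
    case (Suc k')
    then have "prefers v x y"
      using kl l' unfolding prefers_def by (intro exI[of _ k'] exI[of _ l']) auto
    then show ?thesis ..
  qed
next
  assume "(x = a \<and> y \<in> set v) \<or> prefers v x y"
  then show "prefers (a # v) x y"
  proof
    assume "x = a \<and> y \<in> set v"
    then obtain l where "l < length v" "v ! l = y" by (auto simp: in_set_conv_nth)
    then show ?thesis using \<open>x = a \<and> y \<in> set v\<close> unfolding prefers_def
      by (intro exI[of _ 0] exI[of _ "Suc l"]) auto
  next
    assume "prefers v x y"
    then obtain k l where "k < l" "l < length v" "v ! k = x" "v ! l = y" by (auto simp: prefers_def)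
    then show ?thesis unfolding prefers_def by (intro exI[of _ "Suc k"] exI[of _ "Suc l"]) auto
  qed
qed

lemma prefers_in_set: "prefers v x y \<Longrightarrow> x \<in> set v \<and> y \<in> set v"
  by (induction v) auto

lemma prefers_irrefl: "distinct v \<Longrightarrow> \<not> prefers v x x"
  by (induction v) (auto dest: prefers_in_set)

lemma prefers_trans: "distinct v \<Longrightarrow> prefers v x y \<Longrightarrow> prefers v y z \<Longrightarrow> prefers v x z"
  by (induction v) (auto dest: prefers_in_set)

lemma prefers_total:
  "x \<in> set v \<Longrightarrow> y \<in> set v \<Longrightarrow> x \<noteq> y \<Longrightarrow> prefers v x y \<or> prefers v y x"
  by (induction v) auto

lemma prefers_take:
  "distinct v \<Longrightarrow> prefers v x y \<Longrightarrow> y \<in> set (take n v) \<Longrightarrow> x \<in> set (take n v)"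
proof (induction v arbitrary: n)
  case (Cons a v)
  then show ?case by (cases n) (auto dest: prefers_in_set)
qed simp

lemma hd_filter_prefers:
  assumes "distinct xs" "y \<in> set xs" "P y" "y \<noteq> hd (filter P xs)"
  shows "prefers xs (hd (filter P xs)) y"
  using assms by (induction xs) auto

lemma card_top3_le: "card (top3 v) \<le> 3"
  unfolding top3_def using card_length[of "take 3 v"] by simp

definition beats :: "'a list \<Rightarrow> 'a list list \<Rightarrow> 'a \<Rightarrow> 'a \<Rightarrow> bool" where
  "beats t V y x \<longleftrightarrow> app_score V x < app_score V y \<or>
     (app_score V y = app_score V x \<and> prefers t y x)"

lemma beats_irrefl: "distinct t \<Longrightarrow> \<not> beats t V x x"
  by (simp add: beats_def prefers_irrefl)

lemma beats_trans: "distinct t \<Longrightarrow> beats t V x y \<Longrightarrow> beats t V y z \<Longrightarrow> beats t V x z"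
  unfolding beats_def using prefers_trans by fastforce

lemma beats_total:
  "x \<in> set t \<Longrightarrow> y \<in> set t \<Longrightarrow> x \<noteq> y \<Longrightarrow> beats t V x y \<or> beats t V y x"
  unfolding beats_def using prefers_total by fastforce

lemma app3_beats:
  assumes "distinct t" "t \<noteq> []"
  shows "app3 t V \<in> set t" and "y \<in> set t \<Longrightarrow> y \<noteq> app3 t V \<Longrightarrow> beats t V (app3 t V) y"
proof -
  define M where "M = Max (app_score V ` set t)"
  define P where "P = (\<lambda>x. app_score V x = M)"
  have "M \<in> app_score V ` set t" unfolding M_def using assms(2) by (intro Max_in) auto
  then have "filter P t \<noteq> []" unfolding P_def by (auto simp: filter_empty_conv)
  moreover have w: "app3 t V = hd (filter P t)" by (simp add: app3_def P_def M_def)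
  ultimately have w_in: "app3 t V \<in> set (filter P t)" by (metis list.set_sel(1))
  then show "app3 t V \<in> set t" by simp
  assume y: "y \<in> set t" "y \<noteq> app3 t V"
  have "app_score V y \<le> M" unfolding M_def using y(1) by simp
  moreover have "P y \<Longrightarrow> prefers t (app3 t V) y"
    using hd_filter_prefers[OF assms(1) y(1)] y(2) w by simp
  ultimately show "beats t V (app3 t V) y" using w_in unfolding beats_def P_def by fastforce
qed

lemma beats_update:
  assumes "i < length V" "y \<notin> top3 (V ! i)" "x \<in> top3 (V ! i)" "beats t V y x"
  shows "beats t (V[i := v']) y x"
proof -
  have "app_score V y \<le> app_score (V[i := v']) y"
    unfolding app_score_def by (rule card_mono) (use assms in \<open>auto simp: nth_list_update\<close>)
  moreover have "app_score (V[i := v']) x \<le> app_score V x"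
    unfolding app_score_def by (rule card_mono) (use assms in \<open>auto simp: nth_list_update\<close>)
  ultimately show ?thesis using assms(4) unfolding beats_def by auto
qed

definition rank :: "'a list \<Rightarrow> 'a list list \<Rightarrow> 'a \<Rightarrow> nat" where
  "rank t V x = card {y \<in> set t. beats t V y x}"

lemma rank_less:
  assumes "distinct t" "beats t V x y" "x \<in> set t"
  shows "rank t V x < rank t V y"
proof -
  have "{z \<in> set t. beats t V z x} \<subseteq> {z \<in> set t. beats t V z y}"
    using beats_trans[OF assms(1) _ assms(2)] by blast
  moreover have "x \<in> {z \<in> set t. beats t V z y} - {z \<in> set t. beats t V z x}"
    using assms beats_irrefl[OF assms(1)] by simp
  ultimately show ?thesis unfolding rank_def by (intro psubset_card_mono) auto
qed

lemma inj_on_rank: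
  assumes "distinct t" shows "inj_on (rank t V) (set t)"
proof (rule inj_onI, rule ccontr)
  fix x y assume xy: "x \<in> set t" "y \<in> set t" "rank t V x = rank t V y" "x \<noteq> y"
  from beats_total[OF xy(1,2,4)] show False
    using rank_less[OF assms, of V x y] rank_less[OF assms, of V y x] xy by auto
qed

lemma rank_pos:
  assumes "distinct t" "t \<noteq> []" "x \<in> set t" "x \<noteq> app3 t V"
  shows "0 < rank t V x"
  using rank_less[OF assms(1) app3_beats(2)[OF assms] app3_beats(1)[OF assms(1,2)]] by simp

lemma rank_manipulated_winner:
  assumes "distinct t" "t \<noteq> []" "i < length V" "x \<in> top3 (V ! i)"
    and "app3 t (V[i := v']) = x"
  shows "rank t V x \<le> 2"
proof -
  have "{y \<in> set t. beats t V y x} \<subseteq> top3 (V ! i) - {x}"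
  proof (intro subsetI DiffI)
    fix y assume y: "y \<in> {y \<in> set t. beats t V y x}"
    then show "y \<notin> {x}" using beats_irrefl[OF assms(1)] by auto
    show "y \<in> top3 (V ! i)"
    proof (rule ccontr)
      assume "y \<notin> top3 (V ! i)"
      then have "beats t (V[i := v']) y x" using beats_update[OF assms(3) _ assms(4)] y by simp
      moreover have "beats t (V[i := v']) x y"
        using app3_beats(2)[OF assms(1,2), of y "V[i := v']"] assms(5) y \<open>y \<notin> {x}\<close> by simp
      ultimately show False using beats_trans[OF assms(1)] beats_irrefl[OF assms(1)] by metis
    qed
  qed
  then have "rank t V x \<le> card (top3 (V ! i) - {x})"
    unfolding rank_def by (rule card_mono[rotated]) (simp add: top3_def)
  also have "\<dots> \<le> 2"
    using card_top3_le[of "V ! i"] assms(4) by (simp add: top3_def)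
  finally show ?thesis .
qed

theorem mainTheorem11:
  fixes C :: "'a set" and t :: "'a list" and V :: "'a list list"
  assumes "finite C" and "C \<noteq> {}"
    and "is_ranking C t"
    and "\<forall>v\<in>set V. is_ranking C v"
  shows "card {x. \<exists>i < length V. app3 t V \<in> top3 (V ! i) \<and>
                   (\<exists>v'. is_ranking C v' \<and> app3 t (V[i := v']) = x
                         \<and> prefers (V ! i) x (app3 t V))} \<le> 2"
    (is "card ?Q \<le> 2")
proof -
  have t: "distinct t" "t \<noteq> []" using assms(2,3) by (auto simp: is_ranking_def)
  have Q: "x \<in> set t \<and> rank t V x \<in> {1, 2}" if "x \<in> ?Q" for x
  proof -
    obtain i v' where i: "i < length V" "app3 t V \<in> top3 (V ! i)"
      "app3 t (V[i := v']) = x" "prefers (V ! i) x (app3 t V)"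
      using \<open>x \<in> ?Q\<close> by blast
    have "distinct (V ! i)" using assms(4) i(1) by (simp add: is_ranking_def)
    then have "x \<in> top3 (V ! i)" "x \<noteq> app3 t V"
      using prefers_take i(2,4) prefers_irrefl unfolding top3_def by metis+
    moreover have "x \<in> set t" using app3_beats(1)[OF t(1,2)] i(3) by blast
    ultimately show ?thesis
      using rank_manipulated_winner[OF t(1,2) i(1)] rank_pos[OF t(1,2)] i(3) by fastforce
  qed
  have "card ?Q = card (rank t V ` ?Q)"
    using inj_on_subset[OF inj_on_rank[OF t(1)]] Q by (intro card_image[symmetric]) blast
  also have "\<dots> \<le> card {1 :: nat, 2}" using Q by (intro card_mono) auto
  finally show ?thesis by simp
qed

end
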